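(* In the age-structured map $h$ of the context, let $\bm{\hat{y}}$ be an equilibrium whose adult part $\bm{\hat{x}}$ has $\hat{x}_i=0$ for $i$ in a nonempty set $Z\subseteq\mathcal{M}$ and $\hat{x}_i>0$ for $i\in\mathcal{M}\setminus Z$. Assume that for every $i\in\mathcal{M}$, $\hat{x}_i=0$ implies $\hat{x}_iG_i(\bm{\hat{x}})=0$. Let $\bm{\hat{J}}$ be the Jacobian of $h$ at $\bm{\hat{y}}$ and let $\bm{J}^\bullet$ be its principal submatrix indexed by all age classes of the species in $\mathcal{M}\setminus Z$, and assume $\rho(\bm{J}^\bullet)<1$ (vacuous if $Z=\mathcal{M}$). If $$|G_i(\bm{\hat{x}})|\prod_{a=0}^{\delta_i-1}\sigma_{a\mid i} < z_i\quad\text{for all } i\in Z,$$ then $\rho(\bm{\hat{J}})<1$, i.e. $\bm{\hat{y}}$ is locally asymptotically stable.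
   Context: Let $m\ge1$, $\mathcal{M}=\{1,\dots,m\}$. For each species $i$: delay $\delta_i\in\{0,1,2,\dots\}$; survival probabilities $\sigma_{a\mid i}\in(0,1]$ for $a=0,\dots,\delta_i-1$, adult survival $\sigma_{\delta_i\mid i}\in(0,1)$, adult mortality $z_i=1-\sigma_{\delta_i\mid i}$; empty products equal $1$. $G_i:\mathbb{R}^m\to\mathbb{R}$ differentiable. State $\bm{y}=(y_{a\mid i})$, $i\in\mathcal{M}$, $0\le a\le\delta_i$; adults $\bm{x}=(y_{\delta_1\mid1},\dots,y_{\delta_m\mid m})^\top$. Map $h$: if $\delta_i>0$, $h_{0\mid i}(\bm{y})=G_i(\bm{x})y_{\delta_i\mid i}$, $h_{a\mid i}(\bm{y})=\sigma_{a-1\mid i}y_{a-1\mid i}$ ($1\le a\le\delta_i-1$), $h_{\delta_i\mid i}(\bm{y})=\sigma_{\delta_i-1\mid i}y_{\delta_i-1\mid i}+\sigma_{\delta_i\mid i}y_{\delta_i\mid i}$; if $\delta_i=0$, $h_{0\mid i}(\bm{y})=\sigma_{0\mid i}y_{0\mid i}+G_i(\bm{x})y_{0\mid i}$. $\rho(\cdot)$ is spectral radius; an equilibrium is locally asymptotically stable if the Jacobian of $h$ there has spectral radius $<1$. *)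

theory Defs
  imports "HOL-Analysis.Analysis" "Jordan_Normal_Form.Spectral_Radius"
begin

(* Species are the elements of a finite type 'm (so M = UNIV :: 'm set, m = CARD('m) >= 1).
   A state is a function y :: 'm \<times> nat \<Rightarrow> real; the meaningful coordinates are
   the pairs (i,a) with a \<le> \<delta> i. *)

definition Idx :: "('m \<Rightarrow> nat) \<Rightarrow> ('m \<times> nat) set" where
  "Idx \<delta> = {(i, a). a \<le> \<delta> i}"

definition adults :: "('m::finite \<Rightarrow> nat) \<Rightarrow> ('m \<times> nat \<Rightarrow> real) \<Rightarrow> real ^ 'm" where
  "adults \<delta> y = (\<chi> i. y (i, \<delta> i))"

definition hmap :: "('m::finite \<Rightarrow> nat) \<Rightarrow> ('m \<Rightarrow> nat \<Rightarrow> real) \<Rightarrow> ('m \<Rightarrow> real ^ 'm \<Rightarrow> real)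
    \<Rightarrow> ('m \<times> nat \<Rightarrow> real) \<Rightarrow> ('m \<times> nat \<Rightarrow> real)" where
  "hmap \<delta> \<sigma> G y = (\<lambda>(i, a).
     if \<delta> i = 0 then
       (if a = 0 then \<sigma> i 0 * y (i, 0) + G i (adults \<delta> y) * y (i, 0) else 0)
     else if a = 0 then G i (adults \<delta> y) * y (i, \<delta> i)
     else if a < \<delta> i then \<sigma> i (a - 1) * y (i, a - 1)
     else if a = \<delta> i then \<sigma> i (a - 1) * y (i, a - 1) + \<sigma> i (\<delta> i) * y (i, \<delta> i)
     else 0)"

definition jac :: "('m::finite \<Rightarrow> nat) \<Rightarrow> ('m \<Rightarrow> nat \<Rightarrow> real) \<Rightarrow> ('m \<Rightarrow> real ^ 'm \<Rightarrow> real)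
    \<Rightarrow> ('m \<times> nat \<Rightarrow> real) \<Rightarrow> ('m \<times> nat) \<Rightarrow> ('m \<times> nat) \<Rightarrow> real" where
  "jac \<delta> \<sigma> G y p q = deriv (\<lambda>t. hmap \<delta> \<sigma> G (y(q := y q + t)) p) 0"

(* a matrix indexed by a finite set I, turned into a library matrix via an (arbitrary)
   enumeration of I; the spectral radius does not depend on the enumeration *)
definition idx_enum :: "'i set \<Rightarrow> nat \<Rightarrow> 'i" where
  "idx_enum I = (SOME f. bij_betw f {..<card I} I)"

definition mat_on :: "'i set \<Rightarrow> ('i \<Rightarrow> 'i \<Rightarrow> real) \<Rightarrow> real mat" where
  "mat_on I A = mat (card I) (card I) (\<lambda>(r, c). A (idx_enum I r) (idx_enum I c))"

definition spec_rad_on :: "'i set \<Rightarrow> ('i \<Rightarrow> 'i \<Rightarrow> real) \<Rightarrow> real" where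
  "spec_rad_on I A = spectral_radius (map_mat complex_of_real (mat_on I A))"

end

(* At an adult-free species i the term carrying the derivative of G_i is multiplied by
   y(i, delta_i) = 0, so the rows of the Jacobian belonging to species i form the Leslie matrix
   with fecundity G_i(x) and survival rates sigma_{a|i}, and they only involve species i.
   Hence an eigenvector either vanishes on all species of Z, and is then an eigenvector of the
   principal submatrix J', or its restriction to some species of Z is a Leslie eigenvector.
   A Leslie eigenvalue l satisfies l^delta (l - sigma_delta) = G_i(x) * prod_{a<delta} sigma_a,
   and for |l| >= 1 the left-hand side has modulus at least 1 - sigma_delta, which the
   hypothesis on Z excludes. *)

theory Submission
  imports Defs
begin

definition eigenvector_on :: "'i set \<Rightarrow> ('i \<Rightarrow> 'i \<Rightarrow> real) \<Rightarrow> ('i \<Rightarrow> complex) \<Rightarrow> complex \<Rightarrow> bool" where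
  "eigenvector_on I A v l \<longleftrightarrow>
     (\<exists>p\<in>I. v p \<noteq> 0) \<and> (\<forall>p\<in>I. (\<Sum>q\<in>I. of_real (A p q) * v q) = l * v p)"

lemma bij_betw_idx_enum: "finite I \<Longrightarrow> bij_betw (idx_enum I) {..<card I} I"
  unfolding idx_enum_def
  by (metis (mono_tags) ex_bij_betw_nat_finite atLeast0LessThan someI_ex)

lemma mat_on_carrier_mat: "mat_on I A \<in> carrier_mat (card I) (card I)"
  by (simp add: mat_on_def)

lemma mat_on_mult_vec:
  assumes "finite I" and "r < card I"
  shows "(map_mat of_real (mat_on I A) *\<^sub>v vec (card I) (\<lambda>c. v (idx_enum I c))) $ r =
           (\<Sum>q\<in>I. of_real (A (idx_enum I r) q) * v q)"
proof -
  have "(map_mat of_real (mat_on I A) *\<^sub>v vec (card I) (\<lambda>c. v (idx_enum I c))) $ r =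
        (\<Sum>c<card I. of_real (A (idx_enum I r) (idx_enum I c)) * v (idx_enum I c))"
    using assms(2) by (simp add: mat_on_def scalar_prod_def atLeast0LessThan)
  also have "\<dots> = (\<Sum>q\<in>I. of_real (A (idx_enum I r) q) * v q)"
    by (rule sum.reindex_bij_betw[OF bij_betw_idx_enum[OF assms(1)]])
  finally show ?thesis .
qed

lemma eigenvector_mat_on_iff:
  assumes "finite I"
  shows "eigenvector (map_mat of_real (mat_on I A)) (vec (card I) (\<lambda>r. v (idx_enum I r))) l \<longleftrightarrow>
           eigenvector_on I A v l"
proof -
  note bij = bij_betw_idx_enum[OF assms]
  have nonzero: "vec (card I) (\<lambda>r. v (idx_enum I r)) \<noteq> 0\<^sub>v (card I) \<longleftrightarrow> (\<exists>p\<in>I. v p \<noteq> 0)"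
    using bij_betw_ball[OF bij, of "\<lambda>p. v p = 0"] by (auto simp: Matrix.vec_eq_iff)
  have "map_mat of_real (mat_on I A) *\<^sub>v vec (card I) (\<lambda>r. v (idx_enum I r)) =
          l \<cdot>\<^sub>v vec (card I) (\<lambda>r. v (idx_enum I r)) \<longleftrightarrow>
        (\<forall>r<card I. (\<Sum>q\<in>I. of_real (A (idx_enum I r) q) * v q) = l * v (idx_enum I r))"
    using mat_on_carrier_mat[of I A]
    by (auto simp: Matrix.vec_eq_iff mat_on_mult_vec[OF assms] simp del: index_mult_mat_vec)
  also have "\<dots> \<longleftrightarrow> (\<forall>p\<in>I. (\<Sum>q\<in>I. of_real (A p q) * v q) = l * v p)"
    using bij_betw_ball[OF bij] by (simp add: Ball_def)
  finally show ?thesis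
    using nonzero mat_on_carrier_mat[of I A] by (auto simp: eigenvector_def eigenvector_on_def)
qed

lemma eigenvalue_mat_on_iff:
  assumes "finite I"
  shows "eigenvalue (map_mat of_real (mat_on I A)) l \<longleftrightarrow> (\<exists>v. eigenvector_on I A v l)"
proof
  assume "eigenvalue (map_mat of_real (mat_on I A)) l"
  then obtain w where w: "eigenvector (map_mat of_real (mat_on I A)) w l"
    by (auto simp: eigenvalue_def)
  define v where "v p = w $ the_inv_into {..<card I} (idx_enum I) p" for p
  have "inj_on (idx_enum I) {..<card I}"
    using bij_betw_idx_enum[OF assms] by (rule bij_betw_imp_inj_on)
  moreover have "w \<in> carrier_vec (card I)"
    using w mat_on_carrier_mat[of I A] by (auto simp: eigenvector_def)
  ultimately have "w = vec (card I) (\<lambda>r. v (idx_enum I r))"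
    by (auto simp: v_def the_inv_into_f_f)
  with w show "\<exists>v. eigenvector_on I A v l"
    using eigenvector_mat_on_iff[OF assms] by metis
qed (auto simp: eigenvalue_def eigenvector_mat_on_iff[OF assms, symmetric])

lemma spec_rad_on_less_1_iff:
  assumes "finite I" and "I \<noteq> {}"
  shows "spec_rad_on I A < 1 \<longleftrightarrow> (\<forall>v l. eigenvector_on I A v l \<longrightarrow> cmod l < 1)"
proof -
  define M where "M = map_mat complex_of_real (mat_on I A)"
  have M: "M \<in> carrier_mat (card I) (card I)" using mat_on_carrier_mat by (simp add: M_def)
  have "card I > 0" using assms by (simp add: card_gt_0_iff)
  note max = spectral_radius_mem_max[OF M this]
  have spectrum: "l \<in> spectrum M \<longleftrightarrow> (\<exists>v. eigenvector_on I A v l)" for l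
    using eigenvalue_mat_on_iff[OF assms(1)] by (simp add: spectrum_def M_def)
  show ?thesis
  proof
    assume "spec_rad_on I A < 1"
    show "\<forall>v l. eigenvector_on I A v l \<longrightarrow> cmod l < 1"
    proof (intro allI impI)
      fix v l assume "eigenvector_on I A v l"
      then have "cmod l \<le> spectral_radius M" using max(2) spectrum by blast
      with \<open>spec_rad_on I A < 1\<close> show "cmod l < 1" by (simp add: spec_rad_on_def M_def)
    qed
  next
    assume "\<forall>v l. eigenvector_on I A v l \<longrightarrow> cmod l < 1"
    moreover obtain l where "l \<in> spectrum M" "spectral_radius M = cmod l"
      using max(1) by auto
    ultimately show "spec_rad_on I A < 1"
      using spectrum unfolding spec_rad_on_def M_def by auto
  qed
qed

lemma eigenvector_on_subset:
  assumes "eigenvector_on I A v l" and "finite I" and "B \<subseteq> I" and "\<forall>p\<in>I - B. v p = 0"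
  shows "eigenvector_on B A v l"
proof -
  have "(\<Sum>q\<in>B. of_real (A p q) * v q) = (\<Sum>q\<in>I. of_real (A p q) * v q)" for p
    using assms(2-4) by (intro sum.mono_neutral_left) auto
  then show ?thesis
    using assms unfolding eigenvector_on_def by auto
qed

lemma spec_rad_on_less_1_by_restriction:
  assumes "finite I" and "I \<noteq> {}" and "B \<subseteq> I"
    and restriction: "B \<noteq> {} \<Longrightarrow> spec_rad_on B A < 1"
    and outside: "\<And>v l. eigenvector_on I A v l \<Longrightarrow> \<exists>p\<in>I - B. v p \<noteq> 0 \<Longrightarrow> cmod l < 1"
  shows "spec_rad_on I A < 1"
  unfolding spec_rad_on_less_1_iff[OF assms(1,2)]
proof (intro allI impI)
  fix v l assume eigen: "eigenvector_on I A v l"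
  show "cmod l < 1"
  proof (cases "\<exists>p\<in>I - B. v p \<noteq> 0")
    case True
    with eigen show ?thesis by (rule outside)
  next
    case False
    then have eigen_B: "eigenvector_on B A v l"
      using eigenvector_on_subset[OF eigen assms(1,3)] by blast
    then have "B \<noteq> {}"
      by (auto simp: eigenvector_on_def)
    moreover have "finite B"
      using assms(1,3) by (rule finite_subset[rotated])
    ultimately show ?thesis
      using restriction spec_rad_on_less_1_iff eigen_B by blast
  qed
qed

(* Row a of the Leslie matrix of a single species applied to w; hmap is this with G frozen. *)
definition leslie_mult :: "nat \<Rightarrow> (nat \<Rightarrow> real) \<Rightarrow> real \<Rightarrow> (nat \<Rightarrow> 'a::real_algebra_1) \<Rightarrow> nat \<Rightarrow> 'a" where
  "leslie_mult d s g w a =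
     (if d = 0 then of_real (s 0 + g) * w 0
      else if a = 0 then of_real g * w d
      else if a < d then of_real (s (a - 1)) * w (a - 1)
      else of_real (s (a - 1)) * w (a - 1) + of_real (s d) * w d)"

lemma leslie_eigenvector_char_eq:
  fixes w :: "nat \<Rightarrow> complex"
  assumes eigen: "\<And>a. a \<le> d \<Longrightarrow> leslie_mult d s g w a = l * w a"
    and nonzero: "\<exists>a\<le>d. w a \<noteq> 0" and "l \<noteq> 0"
  shows "l ^ d * (l - of_real (s d)) = of_real (g * (\<Prod>a<d. s a))"
proof (cases d)
  case 0
  with nonzero have "w 0 \<noteq> 0" by simp
  moreover have "(of_real (s 0 + g) - l) * w 0 = 0"
    using eigen[of 0] 0 by (simp add: leslie_mult_def algebra_simps)
  ultimately have "l = of_real (s 0 + g)" by simp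
  with 0 show ?thesis by simp
next
  case (Suc m)
  have birth: "of_real g * w d = l * w 0"
    using eigen[of 0] Suc by (simp add: leslie_mult_def)
  have juvenile: "l ^ a * w a = of_real (\<Prod>b<a. s b) * w 0" if "a \<le> m" for a
    using that
  proof (induction a)
    case (Suc a)
    have "l * w (Suc a) = of_real (s a) * w a"
      using eigen[of "Suc a"] \<open>d = Suc m\<close> Suc.prems by (simp add: leslie_mult_def split: if_splits)
    then have "l ^ Suc a * w (Suc a) = of_real (s a) * (l ^ a * w a)"
      by (simp add: ac_simps)
    then show ?case using Suc by simp
  qed simp
  have "(l - of_real (s d)) * w d = of_real (s m) * w m"
    using eigen[of d] Suc by (simp add: leslie_mult_def algebra_simps)
  then have "l ^ m * (l - of_real (s d)) * w d = of_real (s m) * (l ^ m * w m)"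
    by (metis mult.assoc mult.left_commute)
  also have "\<dots> = of_real (\<Prod>a<d. s a) * w 0"
    using juvenile[of m] Suc by simp
  finally have "l ^ d * (l - of_real (s d)) * w d = of_real (\<Prod>a<d. s a) * (l * w 0)"
    using Suc by (simp add: ac_simps)
  then have adult: "l ^ d * (l - of_real (s d)) * w d = of_real (g * (\<Prod>a<d. s a)) * w d"
    using birth by (simp add: ac_simps)
  have "w d \<noteq> 0"
  proof
    assume "w d = 0"
    then have "w 0 = 0" using birth \<open>l \<noteq> 0\<close> by simp
    then have "w a = 0" if "a \<le> d" for a
      using juvenile[of a] that \<open>w d = 0\<close> \<open>l \<noteq> 0\<close> Suc by (cases "a = d") auto
    with nonzero show False by blast
  qed
  with adult show ?thesis by simp
qed

lemma norm_power_mult_diff_ge: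
  fixes l :: complex
  assumes "1 \<le> cmod l" and "0 \<le> s"
  shows "1 - s \<le> cmod (l ^ n * (l - of_real s))"
proof (cases "s \<le> 1")
  case True
  have "1 - s \<le> cmod l - cmod (of_real s :: complex)" using assms by simp
  also have "\<dots> \<le> cmod (l - of_real s)" by (rule norm_triangle_ineq2)
  finally have "1 * (1 - s) \<le> cmod l ^ n * cmod (l - of_real s)"
    using True assms by (intro mult_mono one_le_power) auto
  then show ?thesis by (simp add: norm_mult norm_power)
qed (simp add: order_trans[OF _ norm_ge_zero])

lemma leslie_eigenvalue_norm_less_1:
  fixes w :: "nat \<Rightarrow> complex"
  assumes s: "\<And>a. a \<le> d \<Longrightarrow> 0 \<le> s a"
    and cond: "\<bar>g\<bar> * (\<Prod>a<d. s a) < 1 - s d"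
    and eigen: "\<And>a. a \<le> d \<Longrightarrow> leslie_mult d s g w a = l * w a"
    and nonzero: "\<exists>a\<le>d. w a \<noteq> 0"
  shows "cmod l < 1"
proof (rule ccontr)
  assume "\<not> cmod l < 1"
  then have l: "1 \<le> cmod l" by simp
  then have "l \<noteq> 0" by auto
  have "(\<Prod>a<d. s a) \<ge> 0" using s by (intro prod_nonneg) auto
  moreover have "l ^ d * (l - of_real (s d)) = of_real (g * (\<Prod>a<d. s a))"
    using eigen nonzero \<open>l \<noteq> 0\<close> by (rule leslie_eigenvector_char_eq)
  ultimately have "cmod (l ^ d * (l - of_real (s d))) = \<bar>g\<bar> * (\<Prod>a<d. s a)"
    by (simp only: norm_of_real abs_mult abs_of_nonneg)
  with norm_power_mult_diff_ge[OF l s[of d], of d] cond show False by linarith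
qed

lemma hmap_eq_leslie_mult:
  "a \<le> \<delta> i \<Longrightarrow> hmap \<delta> \<sigma> G y (i, a) = leslie_mult (\<delta> i) (\<sigma> i) (G i (adults \<delta> y)) (\<lambda>b. y (i, b)) a"
  by (auto simp: hmap_def leslie_mult_def algebra_simps)

lemma has_real_derivative_leslie_mult:
  assumes "g differentiable (at 0)" and "u d = 0"
  shows "((\<lambda>t. leslie_mult d s (g t) (\<lambda>b. u b + t * e b) a)
           has_real_derivative leslie_mult d s (g 0) e a) (at 0)"
proof -
  obtain D where "(g has_real_derivative D) (at 0)"
    using assms(1) real_differentiable_def by blast
  then show ?thesis
    using assms(2) unfolding leslie_mult_def
    by (auto intro!: derivative_eq_intros simp: algebra_simps)
qed

lemma adults_update:
  "adults \<delta> (y(q := y q + t)) = adults \<delta> y + t *\<^sub>R adults \<delta> (\<lambda>p. if p = q then 1 else 0)"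
  by (auto simp: adults_def Finite_Cartesian_Product.vec_eq_iff)

lemma differentiable_adults_update:
  assumes "\<And>x. G differentiable (at x)"
  shows "(\<lambda>t. G (adults \<delta> (y(q := y q + t)))) differentiable (at 0)"
  unfolding adults_update
  by (rule differentiable_compose[of G, unfolded o_def]) (auto intro: assms)

(* The derivative of G i only enters multiplied by y (i, \<delta> i). *)
lemma jac_extinct_species:
  assumes "\<And>x. G i differentiable (at x)" and "y (i, \<delta> i) = 0" and "a \<le> \<delta> i"
  shows "jac \<delta> \<sigma> G y (i, a) q =
           leslie_mult (\<delta> i) (\<sigma> i) (G i (adults \<delta> y)) (\<lambda>b. if q = (i, b) then 1 else 0) a"
proof -
  have "(\<lambda>t. hmap \<delta> \<sigma> G (y(q := y q + t)) (i, a)) =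
        (\<lambda>t. leslie_mult (\<delta> i) (\<sigma> i) (G i (adults \<delta> (y(q := y q + t))))
                (\<lambda>b. y (i, b) + t * (if q = (i, b) then 1 else 0)) a)"
  proof
    fix t
    have "(\<lambda>b. (y(q := y q + t)) (i, b)) = (\<lambda>b. y (i, b) + t * (if q = (i, b) then 1 else 0))"
      by auto
    then show "hmap \<delta> \<sigma> G (y(q := y q + t)) (i, a) =
        leslie_mult (\<delta> i) (\<sigma> i) (G i (adults \<delta> (y(q := y q + t))))
          (\<lambda>b. y (i, b) + t * (if q = (i, b) then 1 else 0)) a"
      by (simp only: hmap_eq_leslie_mult[where \<delta> = \<delta> and i = i, OF assms(3)] \<open>(\<lambda>b. _) = _\<close>)
  qed
  then show ?thesis
    unfolding jac_def
    using has_real_derivative_leslie_mult[where u = "\<lambda>b. y (i, b)" and d = "\<delta> i",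
        OF differentiable_adults_update[OF assms(1), of \<delta> y q] assms(2)]
    by (auto intro!: DERIV_imp_deriv)
qed

lemma leslie_mult_as_sum:
  assumes "a \<le> d"
  shows "(\<Sum>b\<le>d. of_real (leslie_mult d s g (\<lambda>c. if c = b then 1 else 0) a) * w b) =
           leslie_mult d s g w a"
proof -
  have delta: "(\<Sum>b\<le>d. x * of_real (if c = b then 1 else 0) * w b) = x * w c"
    if "c \<le> d" for x c
  proof -
    have "(\<Sum>b\<le>d. x * of_real (if c = b then 1 else 0) * w b) =
          (\<Sum>b\<le>d. if c = b then x * w b else 0)"
      by (rule sum.cong) auto
    then show ?thesis using that by simp
  qed
  show ?thesis
    using assms unfolding leslie_mult_def
    by (simp add: delta distrib_right sum.distrib)
qed

lemma Idx_eq_Sigma: "Idx \<delta> = (SIGMA i:UNIV. {..\<delta> i})"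
  by (auto simp: Idx_def)

lemma finite_Idx: "finite (Idx (\<delta> :: 'm::finite \<Rightarrow> nat))"
  unfolding Idx_eq_Sigma by simp

lemma sum_Idx:
  "(\<Sum>q\<in>Idx \<delta>. f q) = (\<Sum>i\<in>UNIV. \<Sum>a\<le>\<delta> i. f (i, a))" for \<delta> :: "'m::finite \<Rightarrow> nat"
  unfolding Idx_eq_Sigma by (subst sum.Sigma) auto

lemma jac_row_extinct_species:
  fixes v :: "'m::finite \<times> nat \<Rightarrow> complex"
  assumes "\<And>x. G i differentiable (at x)" and "y (i, \<delta> i) = 0" and "a \<le> \<delta> i"
  shows "(\<Sum>q\<in>Idx \<delta>. of_real (jac \<delta> \<sigma> G y (i, a) q) * v q) =
           leslie_mult (\<delta> i) (\<sigma> i) (G i (adults \<delta> y)) (\<lambda>b. v (i, b)) a"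
proof -
  have "(\<Sum>q\<in>Idx \<delta>. of_real (jac \<delta> \<sigma> G y (i, a) q) * v q) =
        (\<Sum>j\<in>UNIV. if j = i then (\<Sum>b\<le>\<delta> i. of_real (leslie_mult (\<delta> i) (\<sigma> i)
            (G i (adults \<delta> y)) (\<lambda>c. if c = b then 1 else 0) a) * v (i, b)) else 0)"
    unfolding sum_Idx jac_extinct_species[where G = G and i = i and \<delta> = \<delta> and y = y, OF assms]
    by (rule sum.cong) (auto simp: leslie_mult_def intro!: sum.cong)
  also have "\<dots> = leslie_mult (\<delta> i) (\<sigma> i) (G i (adults \<delta> y)) (\<lambda>b. v (i, b)) a"
    using leslie_mult_as_sum[OF assms(3)] by simp
  finally show ?thesis .
qed

lemma eigenvalue_norm_less_1_extinct_species:
  fixes v :: "'m::finite \<times> nat \<Rightarrow> complex"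
  assumes eigen: "eigenvector_on (Idx \<delta>) (jac \<delta> \<sigma> G y) v l"
    and nonzero: "\<exists>a\<le>\<delta> i. v (i, a) \<noteq> 0"
    and G_diff: "\<And>x. G i differentiable (at x)"
    and extinct: "y (i, \<delta> i) = 0"
    and \<sigma>: "\<And>a. a \<le> \<delta> i \<Longrightarrow> 0 \<le> \<sigma> i a"
    and cond: "\<bar>G i (adults \<delta> y)\<bar> * (\<Prod>a<\<delta> i. \<sigma> i a) < 1 - \<sigma> i (\<delta> i)"
  shows "cmod l < 1"
proof (rule leslie_eigenvalue_norm_less_1[OF \<sigma> cond _ nonzero])
  fix a assume "a \<le> \<delta> i"
  then have "(i, a) \<in> Idx \<delta>"
    by (simp add: Idx_def)
  with eigen show "leslie_mult (\<delta> i) (\<sigma> i) (G i (adults \<delta> y)) (\<lambda>a. v (i, a)) a = l * v (i, a)"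
    unfolding eigenvector_on_def
      jac_row_extinct_species[where G = G and i = i and \<delta> = \<delta> and y = y,
        OF G_diff extinct \<open>a \<le> \<delta> i\<close>, symmetric]
    by blast
qed

theorem theorem4:
  fixes \<delta> :: "'m::finite \<Rightarrow> nat"
    and \<sigma> :: "'m \<Rightarrow> nat \<Rightarrow> real"
    and G :: "'m \<Rightarrow> real ^ 'm \<Rightarrow> real"
    and yhat :: "'m \<times> nat \<Rightarrow> real"
    and Z :: "'m set"
  assumes sigma_juv: "\<And>i a. a < \<delta> i \<Longrightarrow> 0 < \<sigma> i a \<and> \<sigma> i a \<le> 1"
    and sigma_ad: "\<And>i. 0 < \<sigma> i (\<delta> i) \<and> \<sigma> i (\<delta> i) < 1"
    and G_diff: "\<And>i x. G i differentiable (at x)"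
    and equil: "\<forall>p \<in> Idx \<delta>. hmap \<delta> \<sigma> G yhat p = yhat p"
    and Z_ne: "Z \<noteq> {}"
    and x_Z: "\<forall>i \<in> Z. adults \<delta> yhat $ i = 0"
    and x_pos: "\<forall>i. i \<notin> Z \<longrightarrow> adults \<delta> yhat $ i > 0"
    and xG: "\<forall>i. adults \<delta> yhat $ i = 0 \<longrightarrow> adults \<delta> yhat $ i * G i (adults \<delta> yhat) = 0"
    and rho_bullet: "Z \<noteq> UNIV \<Longrightarrow>
       spec_rad_on {(i, a) \<in> Idx \<delta>. i \<notin> Z} (jac \<delta> \<sigma> G yhat) < 1"
    and cond: "\<forall>i \<in> Z. \<bar>G i (adults \<delta> yhat)\<bar> * (\<Prod>a<\<delta> i. \<sigma> i a) < 1 - \<sigma> i (\<delta> i)"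
  shows "spec_rad_on (Idx \<delta>) (jac \<delta> \<sigma> G yhat) < 1"
proof (rule spec_rad_on_less_1_by_restriction[OF finite_Idx])
  show "Idx \<delta> \<noteq> {}" and "{(i, a) \<in> Idx \<delta>. i \<notin> Z} \<subseteq> Idx \<delta>"
    by (auto simp: Idx_def)
  show "spec_rad_on {(i, a) \<in> Idx \<delta>. i \<notin> Z} (jac \<delta> \<sigma> G yhat) < 1"
    if "{(i, a) \<in> Idx \<delta>. i \<notin> Z} \<noteq> {}"
    using rho_bullet that by auto
  fix v l
  assume eigen: "eigenvector_on (Idx \<delta>) (jac \<delta> \<sigma> G yhat) v l"
    and "\<exists>p\<in>Idx \<delta> - {(i, a) \<in> Idx \<delta>. i \<notin> Z}. v p \<noteq> 0"
  then obtain i where "i \<in> Z" and nonzero: "\<exists>a\<le>\<delta> i. v (i, a) \<noteq> 0"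
    by (auto simp: Idx_def)
  show "cmod l < 1"
  proof (rule eigenvalue_norm_less_1_extinct_species[OF eigen nonzero G_diff])
    show "yhat (i, \<delta> i) = 0"
      using x_Z \<open>i \<in> Z\<close> by (simp add: adults_def)
    show "0 \<le> \<sigma> i a" if "a \<le> \<delta> i" for a
      using that sigma_juv[of a i] sigma_ad[of i] by (cases "a = \<delta> i") auto
    show "\<bar>G i (adults \<delta> yhat)\<bar> * (\<Prod>a<\<delta> i. \<sigma> i a) < 1 - \<sigma> i (\<delta> i)"
      using cond \<open>i \<in> Z\<close> by blast
  qed
qed

end
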